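(* Let $\Gamma=(V,E)$ be a connected directed graph with $|V|=\infty$ and let $W(\Gamma)$ be the set of its words. Then for each $w\in W(\Gamma)$ and each $n\in\mathbb N$ there exists a word $w'\in W(\Gamma)$ of the form $w'=ww_1ww_2w\cdots w_{n-1}w$, with $w_i\in W(\Gamma)$, containing $n$ disjoint subwords equal to $w$, and such that the word $w'':=ww_1ww_2w\cdots w_{n-1}$ is simple.
   Context: A word of $\Gamma$ is a finite path $(v_1,\dots,v_k)$, i.e. $v_i\in V$ and $(v_i,v_{i+1})\in E$; words are concatenated by juxtaposition. $u$ is a subword of a word if it appears as a consecutive block. A word $(v_1,\dots,v_n)$, $n\ge2$, is simple if there is no $k$ with $2\le k\le n$ and $(v_1,\dots,v_{n-k+1})=(v_k,\dots,v_n)$. Connected means that for any two vertices there is a directed path from one to the other. *)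

theory Defs
  imports Main
begin

definition is_word :: "'a set \<Rightarrow> ('a \<times> 'a) set \<Rightarrow> 'a list \<Rightarrow> bool" where
  "is_word V E w \<longleftrightarrow> w \<noteq> [] \<and> set w \<subseteq> V \<and>
     (\<forall>i. Suc i < length w \<longrightarrow> (w ! i, w ! Suc i) \<in> E)"

text \<open>(v_1,...,v_n), n \<ge> 2, is simple iff there is no k with 2 \<le> k \<le> n and
  (v_1,...,v_{n-k+1}) = (v_k,...,v_n).\<close>

definition simple_word :: "'a list \<Rightarrow> bool" where
  "simple_word w \<longleftrightarrow> 2 \<le> length w \<and>
     \<not> (\<exists>k. 2 \<le> k \<and> k \<le> length w \<and> take (length w - k + 1) w = drop (k - 1) w)"

definition connected_digraph :: "'a set \<Rightarrow> ('a \<times> 'a) set \<Rightarrow> bool" where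
  "connected_digraph V E \<longleftrightarrow> (\<forall>u\<in>V. \<forall>v\<in>V. (u, v) \<in> E\<^sup>*)"

end

theory Submission
  imports Defs "HOL-Library.Transitive_Closure_Table"
begin

text \<open>Let a and b be the first and last letter of w. As V is infinite, connectedness yields
  a walk from b to a through a vertex z0 outside w, whose interior r closes w up, and then a
  second closing walk s z t through a vertex z outside w and r, in which z occurs once and a
  does not occur after z. The word w r w r \<dots> w s z t contains z exactly once and its first
  letter a does not occur in t, so it has no proper border: a border of length at most
  |t| would place a inside t, a longer one would contain z at two different positions.\<close>

abbreviation walk :: "('a \<times> 'a) set \<Rightarrow> 'a list \<Rightarrow> bool" where
  "walk E \<equiv> successively (\<lambda>u v. (u, v) \<in> E)"

lemma is_word_iff_walk: "is_word V E w \<longleftrightarrow> w \<noteq> [] \<and> set w \<subseteq> V \<and> walk E w"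
  unfolding is_word_def successively_conv_nth by blast

lemma walk_subset_vertices:
  assumes "E \<subseteq> V \<times> V" "walk E xs" "2 \<le> length xs"
  shows "set xs \<subseteq> V"
  using assms(2,3)
proof (induction xs rule: induct_list012)
  case (3 x y zs)
  then show ?case using assms(1) by (cases zs) auto
qed auto

lemma rtrancl_path_iff_successively:
  "rtrancl_path r x xs y \<longleftrightarrow> successively r (x # xs) \<and> last (x # xs) = y"
proof (induction xs arbitrary: x)
  case Nil
  then show ?case by (auto intro: rtrancl_path.base elim: rtrancl_path.cases)
next
  case (Cons x' xs)
  then show ?case by (auto intro: rtrancl_path.step elim: rtrancl_path.cases)
qed

lemma rtrancl_imp_distinct_walk:
  assumes "(x, y) \<in> E\<^sup>*"
  obtains xs where "distinct (x # xs)" "walk E (x # xs)" "last (x # xs) = y"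
proof -
  have "\<exists>ys. rtrancl_path (\<lambda>u v. (u, v) \<in> E) x ys y"
    using assms rtranclp_eq_rtrancl_path[of "\<lambda>u v. (u, v) \<in> E"] by (simp add: rtrancl_def)
  then obtain ys where "rtrancl_path (\<lambda>u v. (u, v) \<in> E) x ys y" ..
  then obtain xs where "rtrancl_path (\<lambda>u v. (u, v) \<in> E) x xs y" "distinct (x # xs)"
    by (rule rtrancl_path_distinct)
  then show thesis using that by (simp add: rtrancl_path_iff_successively)
qed

lemma walk_through_vertex:
  assumes "connected_digraph V E" "a \<in> V" "b \<in> V" "z \<in> V" "z \<noteq> a" "z \<noteq> b"
  obtains s t where "walk E (b # s @ z # t @ [a])" "z \<notin> set s" "z \<notin> set t" "a \<notin> set t"
proof -
  have "(b, z) \<in> E\<^sup>*" "(z, a) \<in> E\<^sup>*"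
    using assms(1-4) unfolding connected_digraph_def by auto
  obtain xs where xs: "distinct (b # xs)" "walk E (b # xs)" "last (b # xs) = z"
    using \<open>(b, z) \<in> E\<^sup>*\<close> by (rule rtrancl_imp_distinct_walk)
  obtain ys where ys: "distinct (z # ys)" "walk E (z # ys)" "last (z # ys) = a"
    using \<open>(z, a) \<in> E\<^sup>*\<close> by (rule rtrancl_imp_distinct_walk)
  obtain s where s: "b # xs = (b # s) @ [z]"
    using xs(3) assms(6) by (cases xs rule: rev_cases) auto
  obtain t where t: "z # ys = z # t @ [a]"
    using ys(3) assms(5) by (cases ys rule: rev_cases) auto
  have "walk E ((b # s) @ z # t @ [a])"
    using xs(2) ys(2) unfolding s t successively_append_iff by auto
  then show thesis
    using that xs(1) ys(1) unfolding s t by auto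
qed

lemma detour_through_fresh_vertex:
  assumes "connected_digraph V E" "infinite V" "finite F" "a \<in> F" "b \<in> F" "a \<in> V" "b \<in> V"
  obtains s z t where "z \<in> V" "z \<notin> F" "walk E (b # s @ z # t @ [a])"
    "z \<notin> set s" "z \<notin> set t" "a \<notin> set t"
proof -
  obtain z where "z \<in> V" "z \<notin> F"
    using infinite_imp_nonempty[OF Diff_infinite_finite[OF assms(3,2)]] by blast
  moreover have "z \<noteq> a" "z \<noteq> b"
    using \<open>z \<notin> F\<close> assms(4,5) by auto
  ultimately show thesis
    using walk_through_vertex[OF assms(1,6,7)] that by metis
qed

lemma is_word_if_detour:
  assumes "E \<subseteq> V \<times> V" "walk E (b # c @ [a])" "c \<noteq> []"
  shows "is_word V E c"
proof -
  have "set (b # c @ [a]) \<subseteq> V"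
    using walk_subset_vertices[OF assms(1,2)] by simp
  moreover have "walk E c"
    using assms(2) by (simp add: successively_append_iff successively_Cons)
  ultimately show ?thesis
    using assms(3) by (simp add: is_word_iff_walk)
qed

lemma walk_interleave:
  assumes "walk E w" "w \<noteq> []" "\<forall>c\<in>set cs. c \<noteq> [] \<and> walk E (last w # c @ [hd w])"
  shows "walk E (w @ concat (map (\<lambda>c. c @ w) cs))"
  using assms(3)
proof (induction cs)
  case Nil
  show ?case using assms(1) by simp
next
  case (Cons c cs)
  let ?rest = "w @ concat (map (\<lambda>c. c @ w) cs)"
  have "c \<noteq> []" "walk E (last w # c @ [hd w])"
    using Cons.prems by auto
  then have c: "(last w, hd c) \<in> E" "walk E c" "(last c, hd w) \<in> E"
    by (auto simp: successively_Cons successively_append_iff)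
  have "walk E ?rest" "hd ?rest = hd w"
    using Cons assms(2) by auto
  then have "walk E (c @ ?rest)"
    using c \<open>c \<noteq> []\<close> by (simp add: successively_append_iff)
  then have "walk E (w @ c @ ?rest)"
    using assms(1,2) c \<open>c \<noteq> []\<close> by (simp add: successively_append_iff)
  then show ?case
    by simp
qed

lemma simple_word_iff_no_border:
  "simple_word W \<longleftrightarrow>
     2 \<le> length W \<and> (\<forall>L. 0 < L \<longrightarrow> L < length W \<longrightarrow> take L W \<noteq> drop (length W - L) W)"
proof -
  have "(\<exists>k. 2 \<le> k \<and> k \<le> length W \<and> take (length W - k + 1) W = drop (k - 1) W) \<longleftrightarrow>
        (\<exists>L. 0 < L \<and> L < length W \<and> take L W = drop (length W - L) W)"
  proof
    assume "\<exists>k. 2 \<le> k \<and> k \<le> length W \<and> take (length W - k + 1) W = drop (k - 1) W"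
    then obtain k where "2 \<le> k" "k \<le> length W" "take (length W - k + 1) W = drop (k - 1) W"
      by blast
    then show "\<exists>L. 0 < L \<and> L < length W \<and> take L W = drop (length W - L) W"
      by (intro exI[of _ "length W - k + 1"]) (auto simp: Suc_diff_le)
  next
    assume "\<exists>L. 0 < L \<and> L < length W \<and> take L W = drop (length W - L) W"
    then obtain L where "0 < L" "L < length W" "take L W = drop (length W - L) W"
      by blast
    then show "\<exists>k. 2 \<le> k \<and> k \<le> length W \<and> take (length W - k + 1) W = drop (k - 1) W"
      by (intro exI[of _ "length W - L + 1"]) auto
  qed
  then show ?thesis
    unfolding simple_word_def by blast
qed

lemma simple_word_if_unique_letter:
  assumes "X \<noteq> []" "z \<notin> set X" "z \<notin> set t" "hd X \<notin> set t"
  shows "simple_word (X @ z # t)"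
  unfolding simple_word_iff_no_border
proof (intro conjI allI impI notI)
  let ?W = "X @ z # t"
  fix L
  assume L: "0 < L" "L < length ?W" and border: "take L ?W = drop (length ?W - L) ?W"
  show False
  proof (cases "L \<le> length t")
    case True
    have "take L ?W = drop (length t - L) t"
      using border True by (simp add: Suc_diff_le)
    moreover have "drop (length t - L) t \<noteq> []"
      using True L(1) by simp
    ultimately have "hd (take L ?W) \<in> set t"
      by (metis hd_in_set in_set_dropD)
    then show False
      using L(1) assms(1,4) by simp
  next
    case False
    define k where "k = length ?W - L"
    have k: "0 < k" "k \<le> length X"
      using L False unfolding k_def by auto
    have suffix: "drop k ?W = drop k X @ z # t"
      using k by simp
    have "length X < L"
    proof (rule ccontr)
      assume "\<not> length X < L"
      then have "z \<notin> set (take L ?W)"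
        using assms(2) by (auto dest: in_set_takeD)
      moreover have "z \<in> set (drop k ?W)"
        using suffix by simp
      ultimately show False
        using border unfolding k_def by metis
    qed
    then have "take L ?W = X @ z # take (L - length X - 1) t"
      by (simp add: take_Cons')
    then have "X @ z # take (L - length X - 1) t = drop k X @ z # t"
      using border suffix unfolding k_def by metis
    moreover have "z \<notin> set (take (L - length X - 1) t)"
      using assms(3) by (auto dest: in_set_takeD)
    ultimately have "X = drop k X"
      using append_Cons_eq_iff[OF assms(2)] by blast
    then have "length X = length X - k"
      by (metis length_drop)
    then show False
      using k by linarith
  qed
qed (use assms(1) in \<open>cases X; simp\<close>)

theorem lemma5p2:
  fixes V :: "'a set" and E :: "('a \<times> 'a) set" and w :: "'a list" and n :: nat
  assumes "E \<subseteq> V \<times> V"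
    and "connected_digraph V E"
    and "infinite V"
    and "is_word V E w"
    and "n \<ge> 2"
  shows "\<exists>ws :: 'a list list. length ws = n - 1 \<and> (\<forall>u\<in>set ws. is_word V E u) \<and>
           is_word V E (w @ concat (map (\<lambda>u. u @ w) ws)) \<and>
           simple_word (concat (map (\<lambda>u. w @ u) ws))"
proof -
  have w: "w \<noteq> []" "set w \<subseteq> V" "walk E w"
    using assms(4) by (auto simp: is_word_iff_walk)
  then have ab: "hd w \<in> set w" "last w \<in> set w" "hd w \<in> V" "last w \<in> V"
    by auto
  obtain s0 z0 t0 where "walk E (last w # s0 @ z0 # t0 @ [hd w])"
    using detour_through_fresh_vertex[OF assms(2,3) finite_set ab] by metis
  define r where "r = s0 @ z0 # t0"
  have F: "finite (set w \<union> set r)" "hd w \<in> set w \<union> set r" "last w \<in> set w \<union> set r"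
    using ab by auto
  obtain s z t where u: "z \<in> V" "z \<notin> set w \<union> set r" "walk E (last w # s @ z # t @ [hd w])"
    "z \<notin> set s" "z \<notin> set t" "hd w \<notin> set t"
    by (rule detour_through_fresh_vertex[OF assms(2,3) F ab(3,4)])
  define ws where "ws = replicate (n - 2) r @ [s @ z # t]"
  have detours: "\<forall>c\<in>set ws. c \<noteq> [] \<and> walk E (last w # c @ [hd w])"
    using \<open>walk E (last w # s0 @ z0 # t0 @ [hd w])\<close> u(3) unfolding ws_def r_def by auto
  then have words: "\<forall>c\<in>set ws. is_word V E c"
    using is_word_if_detour[OF assms(1)] by blast
  have "is_word V E (w @ concat (map (\<lambda>c. c @ w) ws))"
    using walk_interleave[OF w(3,1) detours] w words by (auto simp: is_word_iff_walk)
  moreover have "simple_word ((concat (map (\<lambda>c. w @ c) (replicate (n - 2) r)) @ w @ s) @ z # t)"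
  proof (rule simple_word_if_unique_letter)
    show "hd (concat (map (\<lambda>c. w @ c) (replicate (n - 2) r)) @ w @ s) \<notin> set t"
      using u(6) w(1) by (cases "n - 2") auto
  qed (use u w(1) in \<open>auto simp: r_def\<close>)
  ultimately show ?thesis
    using words assms(5) by (intro exI[of _ ws]) (simp add: ws_def)
qed

end
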